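(* Let $A\subset\mathbb{R}$, let $f_1,f_2:A\to\mathbb{R}$ be functions and let $a,\lambda,L_1,L_2\in\mathbb{R}$. Suppose $T_5\lim_{x\to a}f_1(x)=L_1$ and $T_5\lim_{x\to a}f_2(x)=L_2$. Then: 1. $T_5\lim_{x\to a}\left(f_1(x)+f_2(x)\right)=L_1+L_2$; 2. $T_5\lim_{x\to a}\left(f_1(x)f_2(x)\right)=L_1L_2$; 3. if $L_2\neq0$, then $T_5\lim_{x\to a}\frac{f_1(x)}{f_2(x)}=\frac{L_1}{L_2}$, where $f_1/f_2$ is considered on the set $\{x\in A: f_2(x)\neq0\}$; 4. $T_5\lim_{x\to a}\left(\lambda f_1(x)\right)=\lambda L_1$.
   Context: For $B\subset\mathbb{R}$, $f:B\to\mathbb{R}$ and $a,L\in\mathbb{R}$, $T_5\lim_{x\to a}f(x)=L$ means: for every real $\varepsilon>0$ there exists a real $\delta_\varepsilon>0$ such that the set $\left\{x\in\left((a-\delta_{\varepsilon},a+\delta_{\varepsilon})\setminus\{a\}\right)\cap B:\ |f(x)-L|\geq\varepsilon\right\}$ is countable (finite or countably infinite). *)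

theory Defs
  imports "HOL-Analysis.Analysis"
begin

text \<open>A function B -> R is modelled as a total function real => real whose values outside B
  are irrelevant.\<close>
definition T5lim :: "real set \<Rightarrow> (real \<Rightarrow> real) \<Rightarrow> real \<Rightarrow> real \<Rightarrow> bool" where
  "T5lim B f a L \<longleftrightarrow>
     (\<forall>\<epsilon>>0. \<exists>\<delta>>0. countable {x \<in> ({a - \<delta> <..< a + \<delta>} - {a}) \<inter> B. \<bar>f x - L\<bar> \<ge> \<epsilon>})"

end

theory Submission
  imports Defs
begin

text \<open>A \<open>T5\<close> limit is an ordinary filter limit: the filter of punctured neighbourhoods of \<open>a\<close>
  within \<open>B\<close>, refined so that countable sets are negligible. The four limit rules are then
  instances of the library's rules for \<open>tendsto\<close>, and passing to the smaller domain
  \<open>{x \<in> A. f2 x \<noteq> 0}\<close> only makes the filter finer.\<close>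

definition cocountable :: "'a filter" where
  "cocountable = Abs_filter (\<lambda>P. countable {x. \<not> P x})"

lemma eventually_cocountable: "eventually P cocountable \<longleftrightarrow> countable {x. \<not> P x}"
  unfolding cocountable_def
proof (rule eventually_Abs_filter)
  show "is_filter (\<lambda>P. countable {x :: 'a. \<not> P x})"
  proof
    fix P Q :: "'a \<Rightarrow> bool"
    assume "countable {x. \<not> P x}" "countable {x. \<not> Q x}"
    then have "countable ({x. \<not> P x} \<union> {x. \<not> Q x})" by (rule countable_Un)
    then show "countable {x. \<not> (P x \<and> Q x)}" by (rule countable_subset[rotated]) auto
  next
    fix P Q :: "'a \<Rightarrow> bool"
    assume "\<forall>x. P x \<longrightarrow> Q x" "countable {x. \<not> P x}"
    then show "countable {x. \<not> Q x}" by (blast intro: countable_subset[rotated])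
  qed simp
qed

lemma eventually_at_within_cocountable:
  fixes a :: real
  shows "eventually P (inf (at a within B) cocountable) \<longleftrightarrow>
    (\<exists>\<delta>>0. countable {x \<in> ({a - \<delta> <..< a + \<delta>} - {a}) \<inter> B. \<not> P x})"
    (is "_ \<longleftrightarrow> (\<exists>\<delta>>0. countable (?E \<delta>))")
proof
  assume "eventually P (inf (at a within B) cocountable)"
  then obtain Q1 Q2 where "eventually Q1 (at a within B)" and Q2: "countable {x. \<not> Q2 x}"
    and P: "\<And>x. Q1 x \<Longrightarrow> Q2 x \<Longrightarrow> P x"
    unfolding eventually_inf eventually_cocountable by blast
  then obtain \<delta> where "\<delta> > 0" and Q1: "\<And>x. x \<in> B \<Longrightarrow> x \<noteq> a \<Longrightarrow> dist x a < \<delta> \<Longrightarrow> Q1 x"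
    unfolding eventually_at by blast
  have "?E \<delta> \<subseteq> {x. \<not> Q2 x}"
    using P Q1 by (auto simp: dist_real_def abs_less_iff)
  with Q2 \<open>\<delta> > 0\<close> show "\<exists>\<delta>>0. countable (?E \<delta>)"
    by (blast intro: countable_subset)
next
  assume "\<exists>\<delta>>0. countable (?E \<delta>)"
  then obtain \<delta> where "\<delta> > 0" and E: "countable (?E \<delta>)" by blast
  have "eventually (\<lambda>x. x \<in> ({a - \<delta> <..< a + \<delta>} - {a}) \<inter> B) (at a within B)"
    unfolding eventually_at using \<open>\<delta> > 0\<close> by (auto simp: dist_real_def abs_less_iff)
  moreover have "eventually (\<lambda>x. x \<notin> ?E \<delta>) cocountable"
    unfolding eventually_cocountable by (rule countable_subset[OF _ E]) auto
  ultimately show "eventually P (inf (at a within B) cocountable)"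
    unfolding eventually_inf by blast
qed

lemma T5lim_iff_tendsto: "T5lim B f a L \<longleftrightarrow> (f \<longlongrightarrow> L) (inf (at a within B) cocountable)"
  unfolding T5lim_def tendsto_iff eventually_at_within_cocountable
  by (simp add: dist_real_def not_less)

theorem theorem4:
  fixes A :: "real set" and f1 f2 :: "real \<Rightarrow> real" and a lam L1 L2 :: real
  assumes "T5lim A f1 a L1" and "T5lim A f2 a L2"
  shows "T5lim A (\<lambda>x. f1 x + f2 x) a (L1 + L2)
    \<and> T5lim A (\<lambda>x. f1 x * f2 x) a (L1 * L2)
    \<and> (L2 \<noteq> 0 \<longrightarrow> T5lim {x \<in> A. f2 x \<noteq> 0} (\<lambda>x. f1 x / f2 x) a (L1 / L2))
    \<and> T5lim A (\<lambda>x. lam * f1 x) a (lam * L1)"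
proof -
  let ?F = "\<lambda>B. inf (at a within B) cocountable"
  have f1: "(f1 \<longlongrightarrow> L1) (?F A)" and f2: "(f2 \<longlongrightarrow> L2) (?F A)"
    using assms by (simp_all add: T5lim_iff_tendsto)
  have finer: "?F {x \<in> A. f2 x \<noteq> 0} \<le> ?F A"
    by (intro inf_mono at_le) auto
  have "L2 \<noteq> 0 \<Longrightarrow> ((\<lambda>x. f1 x / f2 x) \<longlongrightarrow> L1 / L2) (?F {x \<in> A. f2 x \<noteq> 0})"
    using tendsto_mono[OF finer f1] tendsto_mono[OF finer f2] by (rule tendsto_divide)
  then show ?thesis
    using tendsto_add[OF f1 f2] tendsto_mult[OF f1 f2] tendsto_mult_left[OF f1]
    by (simp add: T5lim_iff_tendsto)
qed

end
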